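(* Let $n$ be a positive integer, $d\in\Delta(n)$, and write $d=(1,2,\dots,q,q^{(s_q)},(q-1)^{(s_{q-1})},\dots,1^{(s_1)})$ with $q\ge1$ and $s_1,\dots,s_q\ge0$ integers. Let $\overline{\alpha}=(\overline{\alpha}_1,\dots,\overline{\alpha}_q)$ with $\overline{\alpha}_i=q-i+1+\sum_{k=i}^q s_k$, and let $\underline{\alpha}=\overline{\alpha}^*$ be its conjugate partition. Then for every $\alpha\in[\,d\,]$ we have $\overline{\alpha}\succ\alpha\succ\underline{\alpha}$.
   Context: A partition of a positive integer $n$ is a finite non-increasing sequence $\alpha=(\alpha_1,\dots,\alpha_l)$ of positive integers with sum $n$; $\mathcal{P}(n)$ is the set of partitions of $n$, and $\alpha_i=0$ for $i>l$. The diagonal sequence is $\delta(\alpha)=(d_k)_{k\ge1}$, $d_k=|\{i:1\le i\le k,\ \alpha_i+i-1\ge k\}|$ (trailing zeros omitted). $\Delta(n)=\{\delta(\alpha):\alpha\in\mathcal{P}(n)\}$, $[\,d\,]=\{\alpha\in\mathcal{P}(n):\delta(\alpha)=d\}$. Every $d\in\Delta(n)$ has the stated form, where $j^{(s)}$ denotes $s$ consecutive entries equal to $j$. The conjugate $\alpha^*$ of $\alpha$ has parts $\alpha^*_j=|\{i:\alpha_i\ge j\}|$. For $\alpha=(\alpha_1,\dots,\alpha_s),\beta=(\beta_1,\dots,\beta_t)\in\mathcal{P}(n)$, $\alpha\succ\beta$ ($\alpha$ majorizes $\beta$) means $\sum_{i=1}^k\alpha_i\ge\sum_{i=1}^k\beta_i$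 for all $1\le k\le\min\{s,t\}$. *)

theory Defs
  imports Main
begin

definition part_nth :: "nat list \<Rightarrow> nat \<Rightarrow> nat" where
  "part_nth a i = (if 1 \<le> i \<and> i \<le> length a then a ! (i - 1) else 0)"

definition is_partition :: "nat \<Rightarrow> nat list \<Rightarrow> bool" where
  "is_partition n a \<longleftrightarrow> sorted_wrt (\<ge>) a \<and> (\<forall>x\<in>set a. 0 < x) \<and> sum_list a = n"

definition partitions :: "nat \<Rightarrow> nat list set" where
  "partitions n = {a. is_partition n a}"

definition diag_entry :: "nat list \<Rightarrow> nat \<Rightarrow> nat" where
  "diag_entry a k = card {i. 1 \<le> i \<and> i \<le> k \<and> part_nth a i + i - 1 \<ge> k}"

text \<open>The diagonal sequence with trailing zeros omitted. All d_k with
  k > length a + sum_list a vanish, so listing k = 1 .. length a + sum_list a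
  and dropping trailing zeros gives the whole sequence.\<close>
definition delta :: "nat list \<Rightarrow> nat list" where
  "delta a = rev (dropWhile (\<lambda>x. x = 0)
      (rev (map (diag_entry a) [1..<length a + sum_list a + 1])))"

definition Delta :: "nat \<Rightarrow> nat list set" where
  "Delta n = delta ` partitions n"

definition diag_class :: "nat \<Rightarrow> nat list \<Rightarrow> nat list set" where
  "diag_class n d = {a \<in> partitions n. delta a = d}"

definition conjugate :: "nat list \<Rightarrow> nat list" where
  "conjugate a = map (\<lambda>j. card {i. 1 \<le> i \<and> i \<le> length a \<and> part_nth a i \<ge> j})
              [1..<part_nth a 1 + 1]"

definition majorizes :: "nat list \<Rightarrow> nat list \<Rightarrow> bool" where
  "majorizes a b \<longleftrightarrow> (\<forall>k. 1 \<le> k \<and> k \<le> min (length a) (length b) \<longrightarrow>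
      sum_list (take k b) \<le> sum_list (take k a))"

definition diag_form :: "nat \<Rightarrow> (nat \<Rightarrow> nat) \<Rightarrow> nat list" where
  "diag_form q s = [1..<q+1] @ concat (map (\<lambda>j. replicate (s j) j) (rev [1..<q+1]))"

definition alpha_bar :: "nat \<Rightarrow> (nat \<Rightarrow> nat) \<Rightarrow> nat list" where
  "alpha_bar q s = map (\<lambda>i. q - i + 1 + (\<Sum>k = i..q. s k)) [1..<q+1]"

end

(*
  Draw alpha as a Young diagram, cell (i, j) lying in row i and column j. The cells on the
  antidiagonal i + j = m + 1 are exactly d_m many, and alpha_bar_i = #{m. d_m >= i}.
  A set of cells contained in k rows, or in k columns, meets the m-th antidiagonal in at
  most min(d_m, k) cells, hence has at most sum_m min(d_m, k) = alpha_bar_1 + ... + alpha_bar_k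
  cells; for the first k rows this is the upper bound. For the lower bound, the cells below
  row k together with the k x alpha_(k+1) rectangle lie in the first alpha_(k+1) columns;
  comparing with the total number of cells gives sum_i min(alpha_bar_i, k) <= alpha_1 + ... +
  alpha_k, whose left-hand side is the sum of the first k parts of the conjugate of alpha_bar.
*)

theory Submission
  imports Defs
begin

definition diagram :: "nat list \<Rightarrow> (nat \<times> nat) set" where
  "diagram a = {(i, j). 1 \<le> i \<and> 1 \<le> j \<and> j \<le> part_nth a i}"

definition diag_ge_count :: "nat list \<Rightarrow> nat \<Rightarrow> nat" where
  "diag_ge_count a i = card {m \<in> {1..length a + sum_list a}. i \<le> diag_entry a m}"

lemma part_nth_le_sum_list: "part_nth a i \<le> sum_list a"
  unfolding part_nth_def using elem_le_sum_list[of "i - 1" a] by auto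

lemma le_length_if_part_nth_pos: "0 < part_nth a i \<Longrightarrow> i \<le> length a"
  unfolding part_nth_def by (auto split: if_splits)

lemma part_nth_antimono:
  assumes "sorted_wrt (\<ge>) a" "1 \<le> i" "i \<le> i'"
  shows "part_nth a i' \<le> part_nth a i"
  using assms sorted_wrt_nth_less[OF assms(1), of "i - 1" "i' - 1"]
  unfolding part_nth_def by (cases "i = i'") auto

lemma sum_list_take_eq_sum_part_nth:
  "k \<le> length a \<Longrightarrow> sum_list (take k a) = (\<Sum>i = 1..k. part_nth a i)"
proof (induction k)
  case (Suc k)
  then have "take (Suc k) a = take k a @ [part_nth a (Suc k)]"
    by (simp add: take_Suc_conv_app_nth part_nth_def)
  then show ?case using Suc by simp
qed simp

lemma diagram_subset: "diagram a \<subseteq> {1..length a} \<times> {1..sum_list a}"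
  unfolding diagram_def
  using le_length_if_part_nth_pos part_nth_le_sum_list order_trans by fastforce

lemma finite_diagram: "finite (diagram a)"
  using diagram_subset finite_subset by blast

lemma card_diagram_first_rows:
  assumes "k \<le> length a"
  shows "card {x \<in> diagram a. fst x \<le> k} = sum_list (take k a)"
proof -
  have "{x \<in> diagram a. fst x \<le> k} = Sigma {1..k} (\<lambda>i. {1..part_nth a i})"
    unfolding diagram_def by auto
  then show ?thesis using sum_list_take_eq_sum_part_nth[OF assms] by simp
qed

lemma card_diagram_antidiagonal:
  assumes "1 \<le> m"
  shows "card {x \<in> diagram a. fst x + snd x = m + 1} = diag_entry a m"
proof -
  let ?T = "{i. 1 \<le> i \<and> i \<le> m \<and> part_nth a i + i - 1 \<ge> m}"
  have "{x \<in> diagram a. fst x + snd x = m + 1} = (\<lambda>i. (i, m + 1 - i)) ` ?T"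
    unfolding diagram_def by force
  moreover have "inj_on (\<lambda>i. (i, m + 1 - i)) ?T" by (auto intro: inj_onI)
  ultimately show ?thesis unfolding diag_entry_def by (simp add: card_image)
qed

lemma card_eq_sum_card_antidiagonals:
  assumes "S \<subseteq> diagram a"
  shows "card S = (\<Sum>m = 1..length a + sum_list a. card {x \<in> S. fst x + snd x = m + 1})"
proof -
  have fin: "finite S" using assms finite_diagram finite_subset by blast
  have "(\<lambda>x. fst x + snd x - 1) ` S \<subseteq> {1..length a + sum_list a}"
    using assms diagram_subset[of a] by force
  from sum.group[OF fin _ this, of "\<lambda>_. 1::nat"]
  have "card S = (\<Sum>m = 1..length a + sum_list a. card {x \<in> S. fst x + snd x - 1 = m})"
    by simp
  also have "\<dots> = (\<Sum>m = 1..length a + sum_list a. card {x \<in> S. fst x + snd x = m + 1})"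
    by (intro sum.cong refl arg_cong[where f = card]) auto
  finally show ?thesis .
qed

lemma card_diagram: "card (diagram a) = (\<Sum>m = 1..length a + sum_list a. diag_entry a m)"
  using card_eq_sum_card_antidiagonals[of "diagram a" a] card_diagram_antidiagonal by simp

lemma card_antidiagonal_le_of_rows:
  assumes "S \<subseteq> diagram a" "\<forall>x \<in> S. fst x \<le> K"
  shows "card {x \<in> S. fst x + snd x = m} \<le> K"
proof -
  have "inj_on fst {x \<in> S. fst x + snd x = m}" by (auto intro: inj_onI)
  moreover have "fst ` {x \<in> S. fst x + snd x = m} \<subseteq> {1..K}"
    using assms unfolding diagram_def by force
  ultimately show ?thesis using card_inj_on_le[of fst _ "{1..K}"] by simp
qed

lemma card_antidiagonal_le_of_columns:
  assumes "S \<subseteq> diagram a" "\<forall>x \<in> S. snd x \<le> K"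
  shows "card {x \<in> S. fst x + snd x = m} \<le> K"
proof -
  have "inj_on snd {x \<in> S. fst x + snd x = m}" by (auto intro: inj_onI)
  moreover have "snd ` {x \<in> S. fst x + snd x = m} \<subseteq> {1..K}"
    using assms unfolding diagram_def by force
  ultimately show ?thesis using card_inj_on_le[of snd _ "{1..K}"] by simp
qed

lemma sum_min_eq_sum_card_ge:
  assumes "finite M"
  shows "(\<Sum>m\<in>M. min (e m) K) = (\<Sum>i = 1..(K::nat). card {m \<in> M. i \<le> e m})"
proof -
  have "min (e m) K = (\<Sum>i = 1..K. if i \<le> e m then 1 else 0)" for m
  proof -
    have "{i \<in> {1..K}. i \<le> e m} = {1..min (e m) K}" by auto
    then show ?thesis by (simp add: sum.If_cases Int_def)
  qed
  then have "(\<Sum>m\<in>M. min (e m) K) = (\<Sum>m\<in>M. \<Sum>i = 1..K. if i \<le> e m then 1 else 0)"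
    by simp
  also have "\<dots> = (\<Sum>i = 1..K. \<Sum>m\<in>M. if i \<le> e m then 1 else 0)"
    by (rule sum.swap)
  also have "\<dots> = (\<Sum>i = 1..K. card {m \<in> M. i \<le> e m})"
    using assms by (simp add: sum.If_cases Int_def conj_commute)
  finally show ?thesis .
qed

lemma card_le_sum_diag_ge_count:
  assumes "S \<subseteq> diagram a" "\<And>m. card {x \<in> S. fst x + snd x = m} \<le> K"
  shows "card S \<le> (\<Sum>i = 1..K. diag_ge_count a i)"
proof -
  have "card S \<le> (\<Sum>m = 1..length a + sum_list a. min (diag_entry a m) K)"
    unfolding card_eq_sum_card_antidiagonals[OF assms(1)]
  proof (intro sum_mono)
    fix m assume "m \<in> {1..length a + sum_list a}"
    have "card {x \<in> S. fst x + snd x = m + 1}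
        \<le> card {x \<in> diagram a. fst x + snd x = m + 1}"
      using assms(1) finite_diagram by (intro card_mono) auto
    also have "\<dots> = diag_entry a m"
      using \<open>m \<in> {1..length a + sum_list a}\<close> by (intro card_diagram_antidiagonal) simp
    finally show "card {x \<in> S. fst x + snd x = m + 1} \<le> min (diag_entry a m) K"
      using assms(2) by simp
  qed
  then show ?thesis unfolding diag_ge_count_def by (simp add: sum_min_eq_sum_card_ge)
qed

lemma sum_take_le_sum_diag_ge_count:
  assumes "k \<le> length a"
  shows "sum_list (take k a) \<le> (\<Sum>i = 1..k. diag_ge_count a i)"
proof -
  have "card {x \<in> diagram a. fst x \<le> k} \<le> (\<Sum>i = 1..k. diag_ge_count a i)"
    by (intro card_le_sum_diag_ge_count card_antidiagonal_le_of_rows) auto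
  then show ?thesis using card_diagram_first_rows[OF assms] by simp
qed

lemma card_diagram_eq_sum_diag_ge_count:
  assumes "\<forall>i > q. diag_ge_count a i = 0"
  shows "card (diagram a) = (\<Sum>i = 1..q. diag_ge_count a i)"
proof -
  let ?M = "{1..length a + sum_list a}"
  have "diag_entry a m \<le> q" if "m \<in> ?M" for m
  proof (rule ccontr)
    assume "\<not> diag_entry a m \<le> q"
    then have "m \<in> {m \<in> ?M. Suc q \<le> diag_entry a m}" using that by simp
    then have "diag_ge_count a (Suc q) \<noteq> 0" unfolding diag_ge_count_def by auto
    then show False using assms by simp
  qed
  then have "card (diagram a) = (\<Sum>m\<in>?M. min (diag_entry a m) q)"
    unfolding card_diagram by (intro sum.cong) auto
  then show ?thesis unfolding diag_ge_count_def by (simp add: sum_min_eq_sum_card_ge)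
qed

lemma card_lower_rows_add_rectangle_le:
  assumes "sorted_wrt (\<ge>) a"
  shows "card {x \<in> diagram a. k < fst x} + k * part_nth a (Suc k)
           \<le> (\<Sum>i = 1..part_nth a (Suc k). diag_ge_count a i)"
proof -
  define J where "J = part_nth a (Suc k)"
  define R where "R = {x \<in> diagram a. k < fst x}"
  have R_J: "snd x \<le> J" if "x \<in> R" for x
    using that part_nth_antimono[OF assms, of "Suc k" "fst x"]
    unfolding R_def J_def diagram_def by auto
  have rect: "{1..k} \<times> {1..J} \<subseteq> diagram a"
    using part_nth_antimono[OF assms, of _ "Suc k"] unfolding diagram_def J_def by force
  have "R \<inter> {1..k} \<times> {1..J} = {}" unfolding R_def by auto
  then have "card R + k * J = card (R \<union> {1..k} \<times> {1..J})"
    using finite_diagram by (subst card_Un_disjoint) (auto simp: R_def)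
  also have "\<dots> \<le> (\<Sum>i = 1..J. diag_ge_count a i)"
  proof (rule card_le_sum_diag_ge_count)
    show "R \<union> {1..k} \<times> {1..J} \<subseteq> diagram a" using rect unfolding R_def by blast
    show "card {x \<in> R \<union> {1..k} \<times> {1..J}. fst x + snd x = m} \<le> J" for m
      using rect R_J by (intro card_antidiagonal_le_of_columns) (auto simp: R_def)
  qed
  finally show ?thesis unfolding R_def J_def .
qed

lemma sum_atLeastAtMost_split:
  fixes g :: "nat \<Rightarrow> 'a::comm_monoid_add"
  assumes "J \<le> q"
  shows "sum g {1..q} = sum g {1..J} + sum g {Suc J..q}"
  using sum.ub_add_nat[of 1 J g "q - J"] assms by simp

lemma sum_min_add_le:
  fixes c :: "nat \<Rightarrow> nat"
  assumes "\<forall>i > q. c i = 0"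
  shows "(\<Sum>i = 1..q. min (c i) k) + (\<Sum>i = 1..J. c i) \<le> (\<Sum>i = 1..q. c i) + k * J"
proof (cases "J \<le> q")
  case True
  have "(\<Sum>i = 1..J. min (c i) k) \<le> k * J"
    using sum_bounded_above[of "{1..J}" "\<lambda>i. min (c i) k" k] by (simp add: mult.commute)
  moreover have "(\<Sum>i = Suc J..q. min (c i) k) \<le> (\<Sum>i = Suc J..q. c i)"
    by (rule sum_mono) simp
  ultimately show ?thesis
    using sum_atLeastAtMost_split[OF True, of c]
      sum_atLeastAtMost_split[OF True, of "\<lambda>i. min (c i) k"]
    by linarith
next
  case False
  have "(\<Sum>i = 1..q. min (c i) k) \<le> k * q"
    using sum_bounded_above[of "{1..q}" "\<lambda>i. min (c i) k" k] by (simp add: mult.commute)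
  also have "\<dots> \<le> k * J" using False by simp
  moreover have "(\<Sum>i = Suc q..J. c i) = 0" using assms by simp
  ultimately show ?thesis using sum_atLeastAtMost_split[of q J c] False by linarith
qed

lemma sum_min_diag_ge_count_le_sum_take:
  assumes "sorted_wrt (\<ge>) a" "k \<le> length a" "\<forall>i > q. diag_ge_count a i = 0"
  shows "(\<Sum>i = 1..q. min (diag_ge_count a i) k) \<le> sum_list (take k a)"
proof -
  let ?A = "{x \<in> diagram a. fst x \<le> k}" and ?R = "{x \<in> diagram a. k < fst x}"
  have "card ?A + card ?R = card (diagram a)"
    using finite_diagram
    by (subst card_Un_disjoint[symmetric]) (auto intro: arg_cong[where f = card])
  then show ?thesis
    using card_diagram_first_rows[OF assms(2)] card_diagram_eq_sum_diag_ge_count[OF assms(3)]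
      card_lower_rows_add_rectangle_le[OF assms(1), of k]
      sum_min_add_le[OF assms(3), of k "part_nth a (Suc k)"]
    by linarith
qed

lemma length_filter_upt: "length (filter P [l..<u]) = card {m \<in> {l..<u}. P m}"
proof -
  have "length (filter P [l..<u]) = card ({x. P x} \<inter> set [l..<u])"
    by (rule distinct_length_filter) simp
  also have "{x. P x} \<inter> set [l..<u] = {m \<in> {l..<u}. P m}" by auto
  finally show ?thesis .
qed

lemma filter_dropWhile_zero:
  "\<not> P 0 \<Longrightarrow> filter P (dropWhile (\<lambda>x. x = (0::nat)) ys) = filter P ys"
  by (induction ys) auto

lemma diag_ge_count_eq_length_filter_delta:
  assumes "1 \<le> i"
  shows "diag_ge_count a i = length (filter ((\<le>) i) (delta a))"
proof -
  let ?N = "length a + sum_list a"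
  have "\<not> i \<le> 0" using assms by simp
  then have "length (filter ((\<le>) i) (delta a))
      = length (filter ((\<le>) i) (map (diag_entry a) [1..<?N + 1]))"
    unfolding delta_def by (simp add: rev_filter[symmetric] filter_dropWhile_zero)
  also have "\<dots> = card {m \<in> {1..<?N + 1}. i \<le> diag_entry a m}"
    by (simp add: filter_map comp_def length_filter_upt del: upt_Suc)
  finally show ?thesis unfolding diag_ge_count_def by (simp add: atLeastLessThanSuc_atLeastAtMost)
qed

lemma length_filter_ge_diag_form:
  assumes "1 \<le> i"
  shows "length (filter ((\<le>) i) (diag_form q s)) = q + 1 - i + sum s {i..q}"
proof -
  have "{m \<in> {1..<q + 1}. i \<le> m} = {i..q}" using assms by auto
  then have "length (filter ((\<le>) i) [1..<q + 1]) = q + 1 - i"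
    by (simp add: length_filter_upt del: upt_Suc)
  moreover have
    "length (filter ((\<le>) i) (concat (map (\<lambda>j. replicate (s j) j) (rev [1..<q + 1]))))
      = sum s {i..q}"
  proof (induction q)
    case (Suc q)
    then show ?case by (auto simp: filter_concat)
  qed (use assms in simp)
  ultimately show ?thesis unfolding diag_form_def by simp
qed

lemma length_alpha_bar: "length (alpha_bar q s) = q"
  by (simp add: alpha_bar_def)

lemma part_nth_alpha_bar:
  assumes "1 \<le> i"
  shows "part_nth (alpha_bar q s) i = q + 1 - i + sum s {i..q}"
  using assms by (cases "i \<le> q") (auto simp: part_nth_def alpha_bar_def simp del: upt_Suc)

lemma diag_ge_count_eq_part_nth_alpha_bar:
  assumes "delta a = diag_form q s" "1 \<le> i"
  shows "diag_ge_count a i = part_nth (alpha_bar q s) i"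
  using assms diag_ge_count_eq_length_filter_delta length_filter_ge_diag_form part_nth_alpha_bar
  by simp

lemma sum_list_take_map_upt:
  assumes "k \<le> u"
  shows "sum_list (take k (map f [1..<u + 1])) = (\<Sum>i = 1..k. f i)"
proof -
  have "take k (map f [1..<u + 1]) = map f [1..<k + 1]"
    using assms by (simp add: take_map take_upt del: upt_Suc)
  then show ?thesis
    by (simp add: sum_set_upt_conv_sum_list_nat[symmetric] atLeastLessThanSuc_atLeastAtMost
        del: upt_Suc)
qed

lemma length_conjugate: "length (conjugate b) = part_nth b 1"
  by (simp add: conjugate_def)

lemma sum_list_take_conjugate:
  assumes "k \<le> part_nth b 1"
  shows "sum_list (take k (conjugate b)) = (\<Sum>i = 1..length b. min (part_nth b i) k)"
proof -
  have "sum_list (take k (conjugate b))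
      = (\<Sum>j = 1..k. card {i \<in> {1..length b}. j \<le> part_nth b i})"
    unfolding conjugate_def sum_list_take_map_upt[OF assms]
    by (intro sum.cong refl arg_cong[where f = card]) auto
  also have "\<dots> = (\<Sum>i = 1..length b. min (part_nth b i) k)"
    by (rule sum_min_eq_sum_card_ge[symmetric]) simp
  finally show ?thesis .
qed

theorem proposition3p1:
  fixes n q :: nat and s :: "nat \<Rightarrow> nat" and d alpha :: "nat list"
  assumes "0 < n"
    and "d \<in> Delta n"
    and "1 \<le> q"
    and "d = diag_form q s"
    and "alpha \<in> diag_class n d"
  shows "majorizes (alpha_bar q s) alpha \<and> majorizes alpha (conjugate (alpha_bar q s))"
proof -
  let ?ab = "alpha_bar q s"
  have sorted: "sorted_wrt (\<ge>) alpha" and "delta alpha = diag_form q s"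
    using assms(4,5) by (auto simp: diag_class_def partitions_def is_partition_def)
  then have count: "diag_ge_count alpha i = part_nth ?ab i" if "1 \<le> i" for i
    using that diag_ge_count_eq_part_nth_alpha_bar by blast
  have "sum_list (take k alpha) \<le> sum_list (take k ?ab)"
    if "k \<le> length alpha" "k \<le> q" for k
  proof -
    have "sum_list (take k alpha) \<le> (\<Sum>i = 1..k. diag_ge_count alpha i)"
      using that(1) by (rule sum_take_le_sum_diag_ge_count)
    also have "\<dots> = sum_list (take k ?ab)"
      using that(2) count by (simp add: sum_list_take_eq_sum_part_nth length_alpha_bar)
    finally show ?thesis .
  qed
  moreover have "sum_list (take k (conjugate ?ab)) \<le> sum_list (take k alpha)"
    if "k \<le> length alpha" "k \<le> part_nth ?ab 1" for k
  proof -
    have "sum_list (take k (conjugate ?ab)) = (\<Sum>i = 1..q. min (diag_ge_count alpha i) k)"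
      using that(2) count by (simp add: sum_list_take_conjugate length_alpha_bar)
    also have "\<dots> \<le> sum_list (take k alpha)"
      using sorted that(1) by (rule sum_min_diag_ge_count_le_sum_take)
        (simp add: count part_nth_def length_alpha_bar)
    finally show ?thesis .
  qed
  ultimately show ?thesis
    unfolding majorizes_def by (simp add: length_alpha_bar length_conjugate)
qed

end
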